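(* Let $k\ge 0$ and let $G=L_k$, of order $n=4k+6$. Then (a) $\gamma_t(G)=(n+2)/2$. Moreover, if $k\ge1$ and $w\in\{v_1,v_2,v_3\}$ (the three subdivision vertices on the path $a_1v_1v_2v_3c_1$), then (b) $\gamma_t(G-w)=n/2$ and (c) $\gamma_t^a(G;w)=n/2$.
   Context: For a graph $G$ with no isolated vertex, a total dominating set (TD-set) is a set $S\subseteq V(G)$ such that every vertex of $G$ is adjacent to some vertex of $S$; $\gamma_t(G)$ is the minimum cardinality of a TD-set. For a vertex $v$ of $G$, an almost total dominating set (ATD-set) of $G$ with respect to $v$ is a set $S\subseteq V(G)$ with $v\in S$ such that every vertex different from $v$ is adjacent to a vertex of $S$ and $v$ has no neighbor in $S$; $\gamma_t^a(G;v)$ is its minimum cardinality. For $k\ge 1$, $G_k$ is the graph with vertex set $\{a_i,b_i,c_i,d_i:1\le i\le k\}$ whose edges are: the edges of the path $a_1b_1a_2b_2\cdots a_kb_k$, the edges of the path $c_1d_1c_2d_2\cdots c_kd_k$, the edges $a_id_i$ and $b_ic_i$ for every $1\le i\le k$, and the two edges $a_1c_1$ and $b_kd_k$. $F_k$ ($k\ge1$) is obtained from $G_k$ by replacing the edge $a_1c_1$ by a path $a_1v_1v_2v_3c_1$ through three new vertices $v_1,v_2,v_3$. $L_0=C_6$, and for $k\ge1$, $L_k$ is obtained from $F_k$ by replacing the edge $b_kd_k$ by a path $b_ku_1u_2u_3d_k$ through three new vertices $u_1,u_2,u_3$. *)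

theory Defs
  imports Main
begin

text \<open>A graph is given by a vertex set VS and a (symmetric, irreflexive) adjacency
  relation E. Vertex deletion G - w is (VS - {w}, E).\<close>

definition is_tdset :: "'a set \<Rightarrow> ('a \<Rightarrow> 'a \<Rightarrow> bool) \<Rightarrow> 'a set \<Rightarrow> bool" where
  "is_tdset VS E S \<longleftrightarrow> S \<subseteq> VS \<and> (\<forall>x\<in>VS. \<exists>u\<in>S. E x u)"

definition gamma_t :: "'a set \<Rightarrow> ('a \<Rightarrow> 'a \<Rightarrow> bool) \<Rightarrow> nat" where
  "gamma_t VS E = Min {card S | S. is_tdset VS E S}"

definition is_atdset :: "'a set \<Rightarrow> ('a \<Rightarrow> 'a \<Rightarrow> bool) \<Rightarrow> 'a \<Rightarrow> 'a set \<Rightarrow> bool" where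
  "is_atdset VS E v S \<longleftrightarrow> S \<subseteq> VS \<and> v \<in> S \<and> (\<forall>x\<in>VS - {v}. \<exists>u\<in>S. E x u)
      \<and> (\<forall>u\<in>S. \<not> E v u)"

definition gamma_ta :: "'a set \<Rightarrow> ('a \<Rightarrow> 'a \<Rightarrow> bool) \<Rightarrow> 'a \<Rightarrow> nat" where
  "gamma_ta VS E v = Min {card S | S. is_atdset VS E v S}"

text \<open>Vertices of L_k: A i = a_i, B i = b_i, C i = c_i, D i = d_i (1 <= i <= k),
  V 1..3 = v_1..v_3, U 1..3 = u_1..u_3. For k = 0, L_0 = C_6 on the six vertices
  V 1, V 2, V 3, U 1, U 2, U 3.\<close>

datatype vtx = A nat | B nat | C nat | D nat | V nat | U nat

definition L_verts :: "nat \<Rightarrow> vtx set" where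
  "L_verts k = {A i | i. 1 \<le> i \<and> i \<le> k} \<union> {B i | i. 1 \<le> i \<and> i \<le> k}
     \<union> {C i | i. 1 \<le> i \<and> i \<le> k} \<union> {D i | i. 1 \<le> i \<and> i \<le> k}
     \<union> {V 1, V 2, V 3, U 1, U 2, U 3}"

definition L_edge0 :: "nat \<Rightarrow> vtx \<Rightarrow> vtx \<Rightarrow> bool" where
  "L_edge0 k x y =
    (if k = 0 then
       (x, y) \<in> {(V 1, V 2), (V 2, V 3), (V 3, U 1), (U 1, U 2), (U 2, U 3), (U 3, V 1)}
     else
       (\<exists>i. 1 \<le> i \<and> i \<le> k \<and>
          ((x = A i \<and> y = B i) \<or> (x = C i \<and> y = D i) \<or>
           (x = A i \<and> y = D i) \<or> (x = B i \<and> y = C i)))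
     \<or> (\<exists>i. 1 \<le> i \<and> i < k \<and> ((x = B i \<and> y = A (i+1)) \<or> (x = D i \<and> y = C (i+1))))
     \<or> (x = A 1 \<and> y = V 1) \<or> (x = V 1 \<and> y = V 2) \<or> (x = V 2 \<and> y = V 3) \<or> (x = V 3 \<and> y = C 1)
     \<or> (x = B k \<and> y = U 1) \<or> (x = U 1 \<and> y = U 2) \<or> (x = U 2 \<and> y = U 3) \<or> (x = U 3 \<and> y = D k))"

definition L_adj :: "nat \<Rightarrow> vtx \<Rightarrow> vtx \<Rightarrow> bool" where
  "L_adj k x y \<longleftrightarrow> L_edge0 k x y \<or> L_edge0 k y x"

end

theory Submission
  imports Defs
begin

(* L_k is bipartite with colour classes
     X = {v2} u {a_i, c_i} u {u1, u3}   and   Y = {u2} u {b_i, d_i} u {v1, v3},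
   and each class is arranged in k + 2 consecutive layers (X_layer, Y_layer) so
   that every vertex of one class has all its neighbours in two consecutive layers
   of the other class.  A set S that totally dominates the vertices of Y must
   therefore satisfy: whenever S misses an X-layer, it contains the whole next
   X-layer (two vertices).  An elementary counting lemma (chain_count) turns this
   into |S n X| >= k + 1, plus one more vertex when v1 and v3 are dominated;
   symmetrically |S n Y| >= k + 1, plus one when v2 is dominated.  This gives
   gamma_t(L_k) >= 2k + 4 and, when one vertex w of the path v1 v2 v3 need not be
   dominated, the bound 2k + 3 for both gamma_t(L_k - w) and gamma_t^a(L_k; w).
   Explicit sets attain these bounds; L_0 = C_6 is handled directly.  The layer
   decomposition also yields |V(L_k)| = 4k + 6. *)

lemma neighbours_A:
  "1 \<le> i \<Longrightarrow> i \<le> k \<Longrightarrow>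
   L_adj k (A i) y \<longleftrightarrow> y = B i \<or> y = D i \<or> (i = 1 \<and> y = V 1) \<or> (1 < i \<and> y = B (i - 1))"
  by (auto simp: L_adj_def L_edge0_def)

lemma neighbours_B:
  "1 \<le> i \<Longrightarrow> i \<le> k \<Longrightarrow>
   L_adj k (B i) y \<longleftrightarrow> y = A i \<or> y = C i \<or> (i = k \<and> y = U 1) \<or> (i < k \<and> y = A (Suc i))"
  by (auto simp: L_adj_def L_edge0_def)

lemma neighbours_C:
  "1 \<le> i \<Longrightarrow> i \<le> k \<Longrightarrow>
   L_adj k (C i) y \<longleftrightarrow> y = D i \<or> y = B i \<or> (i = 1 \<and> y = V 3) \<or> (1 < i \<and> y = D (i - 1))"
  by (auto simp: L_adj_def L_edge0_def)

lemma neighbours_D: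
  "1 \<le> i \<Longrightarrow> i \<le> k \<Longrightarrow>
   L_adj k (D i) y \<longleftrightarrow> y = C i \<or> y = A i \<or> (i = k \<and> y = U 3) \<or> (i < k \<and> y = C (Suc i))"
  by (auto simp: L_adj_def L_edge0_def)

lemma neighbours_V:
  "1 \<le> k \<Longrightarrow> L_adj k (V 1) y \<longleftrightarrow> y = A 1 \<or> y = V 2"
  "1 \<le> k \<Longrightarrow> L_adj k (V 2) y \<longleftrightarrow> y = V 1 \<or> y = V 3"
  "1 \<le> k \<Longrightarrow> L_adj k (V 3) y \<longleftrightarrow> y = V 2 \<or> y = C 1"
  by (auto simp: L_adj_def L_edge0_def)

lemma neighbours_U:
  "1 \<le> k \<Longrightarrow> L_adj k (U 1) y \<longleftrightarrow> y = B k \<or> y = U 2"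
  "1 \<le> k \<Longrightarrow> L_adj k (U 2) y \<longleftrightarrow> y = U 1 \<or> y = U 3"
  "1 \<le> k \<Longrightarrow> L_adj k (U 3) y \<longleftrightarrow> y = U 2 \<or> y = D k"
  by (auto simp: L_adj_def L_edge0_def)

lemmas neighbours = neighbours_A neighbours_B neighbours_C neighbours_D neighbours_V neighbours_U
(* The same facts in simp normal form (the numeral in V 1, U 1 becomes Suc 0),
   so that they can be used as rewrite rules. *)
lemmas neighbours_nf = neighbours[simplified]

definition X_layer :: "nat \<Rightarrow> nat \<Rightarrow> vtx set" where
  "X_layer k t = (if t = 0 then {V 2} else if t \<le> k then {A t, C t} else {U 1, U 3})"

definition Y_layer :: "nat \<Rightarrow> nat \<Rightarrow> vtx set" where
  "Y_layer k t = (if t = 0 then {U 2} else if t \<le> k then {B (Suc k - t), D (Suc k - t)} else {V 1, V 3})"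

lemma card_X_layer: "card (X_layer k t) = (if t = 0 then 1 else 2)"
  by (simp add: X_layer_def)

lemma card_Y_layer: "card (Y_layer k t) = (if t = 0 then 1 else 2)"
  by (simp add: Y_layer_def)

lemma L_verts_layers:
  "L_verts k = (\<Union>t\<le>Suc k. X_layer k t) \<union> (\<Union>t\<le>Suc k. Y_layer k t)"
proof
  show "L_verts k \<subseteq> (\<Union>t\<le>Suc k. X_layer k t) \<union> (\<Union>t\<le>Suc k. Y_layer k t)"
  proof
    fix x assume "x \<in> L_verts k"
    then consider i where "1 \<le> i" "i \<le> k" "x \<in> {A i, C i}"
      | i where "1 \<le> i" "i \<le> k" "x \<in> {B i, D i}"
      | "x \<in> {V 2, U 1, U 3}" | "x \<in> {U 2, V 1, V 3}"
      unfolding L_verts_def by blast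
    then show "x \<in> (\<Union>t\<le>Suc k. X_layer k t) \<union> (\<Union>t\<le>Suc k. Y_layer k t)"
    proof cases
      case (1 i)
      then have "x \<in> X_layer k i" by (simp add: X_layer_def)
      with \<open>i \<le> k\<close> show ?thesis by auto
    next
      case (2 i)
      then have "x \<in> Y_layer k (Suc k - i)" by (auto simp: Y_layer_def)
      then show ?thesis by auto
    next
      case 3
      then have "x \<in> X_layer k 0 \<union> X_layer k (Suc k)" by (auto simp: X_layer_def)
      then show ?thesis by blast
    next
      case 4
      then have "x \<in> Y_layer k 0 \<union> Y_layer k (Suc k)" by (auto simp: Y_layer_def)
      then show ?thesis by blast
    qed
  qed
  show "(\<Union>t\<le>Suc k. X_layer k t) \<union> (\<Union>t\<le>Suc k. Y_layer k t) \<subseteq> L_verts k"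
    by (auto simp: L_verts_def X_layer_def Y_layer_def split: if_splits)
qed

lemma finite_layers: "finite (X_layer k t)" "finite (Y_layer k t)"
  by (simp_all add: X_layer_def Y_layer_def)

lemma X_layers_disjoint: "s \<noteq> t \<Longrightarrow> s \<le> Suc k \<Longrightarrow> t \<le> Suc k \<Longrightarrow> X_layer k s \<inter> X_layer k t = {}"
  by (auto simp: X_layer_def)

lemma Y_layers_disjoint: "s \<noteq> t \<Longrightarrow> s \<le> Suc k \<Longrightarrow> t \<le> Suc k \<Longrightarrow> Y_layer k s \<inter> Y_layer k t = {}"
  by (auto simp: Y_layer_def)

lemma X_Y_layers_disjoint: "X_layer k s \<inter> Y_layer k t = {}"
  by (auto simp: X_layer_def Y_layer_def)

lemma card_by_layers:
  assumes "S \<subseteq> L_verts k"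
  shows "card S = (\<Sum>t\<le>Suc k. card (S \<inter> X_layer k t)) + (\<Sum>t\<le>Suc k. card (S \<inter> Y_layer k t))"
proof -
  let ?X = "\<Union>t\<le>Suc k. S \<inter> X_layer k t" and ?Y = "\<Union>t\<le>Suc k. S \<inter> Y_layer k t"
  have "S = S \<inter> L_verts k"
    using assms by blast
  also have "\<dots> = ?X \<union> ?Y"
    by (simp only: L_verts_layers Int_Un_distrib Int_UN_distrib)
  finally have "S = ?X \<union> ?Y" .
  moreover have "?X \<inter> ?Y = {}"
    using X_Y_layers_disjoint[of k] by blast
  moreover have "card ?X = (\<Sum>t\<le>Suc k. card (S \<inter> X_layer k t))"
    by (rule card_UN_disjoint) (use X_layers_disjoint finite_layers in auto)
  moreover have "card ?Y = (\<Sum>t\<le>Suc k. card (S \<inter> Y_layer k t))"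
    by (rule card_UN_disjoint) (use Y_layers_disjoint finite_layers in auto)
  ultimately show ?thesis
    by (metis card_Un_disjoint finite_UN_I finite_atMost finite_Int finite_layers)
qed

lemma card_L_verts: "card (L_verts k) = 4 * k + 6"
proof -
  have X_sub: "X_layer k t \<subseteq> L_verts k" and Y_sub: "Y_layer k t \<subseteq> L_verts k" if "t \<le> Suc k" for t
    using that by (auto simp: L_verts_layers)
  have "card (L_verts k) = (\<Sum>t\<le>Suc k. card (X_layer k t)) + (\<Sum>t\<le>Suc k. card (Y_layer k t))"
    using card_by_layers[of "L_verts k" k] X_sub Y_sub by (simp add: Int_absorb1)
  also have "\<dots> = 2 * (\<Sum>t\<le>Suc k. if t = 0 then 1 else 2)"
    by (simp add: card_X_layer card_Y_layer)
  also have "(\<Sum>t\<le>Suc k. if t = 0 then 1 else 2) = 2 * k + 3"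
    by (simp add: sum.atMost_Suc_shift del: sum.atMost_Suc)
  finally show ?thesis by simp
qed

lemma chain_count:
  fixes f :: "nat \<Rightarrow> nat"
  assumes "\<forall>i<N. f i = 0 \<longrightarrow> 2 \<le> f (Suc i)"
  shows "N + (if f N = 0 then 0 else 1) \<le> (\<Sum>i\<le>N. f i)"
  using assms
proof (induction N)
  case 0
  show ?case by simp
next
  case (Suc N)
  then have "N + (if f N = 0 then 0 else 1) \<le> (\<Sum>i\<le>N. f i)" and "f N = 0 \<longrightarrow> 2 \<le> f (Suc N)"
    by auto
  then show ?case by (auto split: if_splits)
qed

definition dominated :: "nat \<Rightarrow> vtx set \<Rightarrow> vtx \<Rightarrow> bool" where
  "dominated k S x \<longleftrightarrow> (\<exists>u\<in>S. L_adj k x u)"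

lemma empty_layer_iff: "card (S \<inter> X_layer k t) = 0 \<longleftrightarrow> S \<inter> X_layer k t = {}"
  "card (S \<inter> Y_layer k t) = 0 \<longleftrightarrow> S \<inter> Y_layer k t = {}"
  by (simp_all add: finite_layers)

lemma full_layer: "X_layer k (Suc t) \<subseteq> S \<Longrightarrow> card (S \<inter> X_layer k (Suc t)) = 2"
  "Y_layer k (Suc t) \<subseteq> S \<Longrightarrow> card (S \<inter> Y_layer k (Suc t)) = 2"
  by (simp_all add: Int_absorb1 card_X_layer card_Y_layer)

(* Dominating b_t and d_t forces S to meet
   X-layer t or to contain X-layer t + 1; u2 forces a vertex of the last layer,
   and if v1 and v3 are dominated then the first two layers are handled alike. *)
lemma X_chain_lower:
  assumes k: "1 \<le> k"
    and dom_BD: "\<And>i. 1 \<le> i \<Longrightarrow> i \<le> k \<Longrightarrow> dominated k S (B i) \<and> dominated k S (D i)"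
    and dom_U2: "dominated k S (U 2)"
  shows "k + 1 + (if dominated k S (V 1) \<and> dominated k S (V 3) then 1 else 0)
           \<le> (\<Sum>t\<le>Suc k. card (S \<inter> X_layer k t))"
proof -
  define x where "x t = card (S \<inter> X_layer k t)" for t
  have step: "2 \<le> x (Suc t)" if t: "1 \<le> t" "t \<le> k" and "x t = 0" for t
  proof -
    have "A t \<notin> S" "C t \<notin> S"
      using \<open>x t = 0\<close> t by (auto simp: x_def empty_layer_iff X_layer_def)
    with dom_BD[OF t] t have "X_layer k (Suc t) \<subseteq> S"
      by (auto simp: dominated_def neighbours_nf X_layer_def)
    then show ?thesis by (simp add: x_def full_layer)
  qed
  have last: "x (Suc k) \<noteq> 0"
    using dom_U2 k by (auto simp: x_def empty_layer_iff X_layer_def dominated_def neighbours_nf)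
  show ?thesis
  proof (cases "dominated k S (V 1) \<and> dominated k S (V 3)")
    case True
    have "2 \<le> x 1" if "x 0 = 0"
    proof -
      have "V 2 \<notin> S" using that by (auto simp: x_def empty_layer_iff X_layer_def)
      with True k have "X_layer k 1 \<subseteq> S"
        by (auto simp: dominated_def neighbours_nf X_layer_def)
      then show ?thesis by (simp add: x_def full_layer)
    qed
    then have "\<forall>i<Suc k. x i = 0 \<longrightarrow> 2 \<le> x (Suc i)"
      using step by (auto simp: less_Suc_eq_0_disj)
    from chain_count[OF this] last True show ?thesis by (simp add: x_def)
  next
    case False
    have "\<forall>i<k. x (Suc i) = 0 \<longrightarrow> 2 \<le> x (Suc (Suc i))"
      using step by auto
    from chain_count[OF this] last have "k + 1 \<le> (\<Sum>t\<le>k. x (Suc t))" by simp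
    also have "\<dots> \<le> (\<Sum>t\<le>Suc k. x t)"
      by (simp add: sum.atMost_Suc_shift del: sum.atMost_Suc)
    finally show ?thesis using False by (simp only: if_not_P if_False x_def add_0_right)
  qed
qed

lemma Y_chain_lower:
  assumes k: "1 \<le> k"
    and dom_AC: "\<And>i. 1 \<le> i \<Longrightarrow> i \<le> k \<Longrightarrow> dominated k S (A i) \<and> dominated k S (C i)"
    and dom_U13: "dominated k S (U 1)" "dominated k S (U 3)"
  shows "k + 1 + (if dominated k S (V 2) then 1 else 0) \<le> (\<Sum>t\<le>Suc k. card (S \<inter> Y_layer k t))"
proof -
  define y where "y t = card (S \<inter> Y_layer k t)" for t
  have step: "2 \<le> y (Suc t)" if t: "t \<le> k" and "y t = 0" for t
  proof (cases "t = 0")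
    case True
    then have "U 2 \<notin> S" using \<open>y t = 0\<close> by (auto simp: y_def empty_layer_iff Y_layer_def)
    with dom_U13 k True have "Y_layer k (Suc t) \<subseteq> S"
      by (auto simp: dominated_def neighbours_nf Y_layer_def)
    then show ?thesis by (simp add: y_def full_layer)
  next
    case False
    define j where "j = Suc k - t"
    have j: "1 \<le> j" "j \<le> k" using False t by (auto simp: j_def)
    have "B j \<notin> S" "D j \<notin> S"
      using \<open>y t = 0\<close> False t by (auto simp: y_def j_def empty_layer_iff Y_layer_def)
    with dom_AC[OF j] j
    have "(j = 1 \<and> V 1 \<in> S \<and> V 3 \<in> S) \<or> (1 < j \<and> B (j - 1) \<in> S \<and> D (j - 1) \<in> S)"
      by (auto simp: dominated_def neighbours_nf)
    moreover have "Y_layer k (Suc t) = (if j = 1 then {V 1, V 3} else {B (j - 1), D (j - 1)})"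
      using False t by (auto simp: Y_layer_def j_def Suc_diff_Suc)
    ultimately have "Y_layer k (Suc t) \<subseteq> S" by (auto split: if_splits)
    then show ?thesis by (simp add: y_def full_layer)
  qed
  have last: "dominated k S (V 2) \<Longrightarrow> y (Suc k) \<noteq> 0"
    using k by (auto simp: y_def empty_layer_iff Y_layer_def dominated_def neighbours_nf)
  have "\<forall>i<Suc k. y i = 0 \<longrightarrow> 2 \<le> y (Suc i)"
    using step by auto
  from chain_count[OF this] last show ?thesis by (auto simp: y_def split: if_splits)
qed

lemma layered_lower_bound:
  assumes k: "1 \<le> k" and S: "S \<subseteq> L_verts k"
    and dom: "\<And>x. x \<in> L_verts k - {V 1, V 2, V 3} \<Longrightarrow> dominated k S x"
  shows "2 * k + 2 + (if dominated k S (V 1) \<and> dominated k S (V 3) then 1 else 0)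
           + (if dominated k S (V 2) then 1 else 0) \<le> card S"
proof -
  have "dominated k S (A i) \<and> dominated k S (B i) \<and> dominated k S (C i) \<and> dominated k S (D i)"
    if "1 \<le> i" "i \<le> k" for i
    using that dom by (auto simp: L_verts_def)
  moreover have "dominated k S (U 1)" "dominated k S (U 2)" "dominated k S (U 3)"
    using dom by (auto simp: L_verts_def)
  ultimately show ?thesis
    using X_chain_lower[OF k, of S] Y_chain_lower[OF k, of S] card_by_layers[OF S] by simp
qed

lemma lower_bound_tdset:
  assumes k: "1 \<le> k" and T: "is_tdset (L_verts k) (L_adj k) S"
  shows "2 * k + 4 \<le> card S"
proof -
  have S: "S \<subseteq> L_verts k" and dom: "\<And>x. x \<in> L_verts k \<Longrightarrow> dominated k S x"
    using T by (auto simp: is_tdset_def dominated_def)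
  moreover have "dominated k S (V 1)" "dominated k S (V 2)" "dominated k S (V 3)"
    using dom by (auto simp: L_verts_def)
  ultimately show ?thesis
    using layered_lower_bound[OF k S] by simp
qed

(* ... and a set dominating every vertex except one w on the path v1 v2 v3 has at
   least 2k + 3 vertices.  This covers both TD-sets of L_k - w and ATD-sets
   of L_k with respect to w. *)
lemma lower_bound_all_but_one:
  assumes k: "1 \<le> k" and S: "S \<subseteq> L_verts k" and w: "w \<in> {V 1, V 2, V 3}"
    and dom: "\<forall>x\<in>L_verts k - {w}. dominated k S x"
  shows "2 * k + 3 \<le> card S"
proof -
  have "dominated k S x" if "x \<in> L_verts k - {V 1, V 2, V 3}" for x
    using that dom w by auto
  then have bound: "2 * k + 2 + (if dominated k S (V 1) \<and> dominated k S (V 3) then 1 else 0)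
      + (if dominated k S (V 2) then 1 else 0) \<le> card S"
    by (rule layered_lower_bound[OF k S])
  have "(dominated k S (V 1) \<and> dominated k S (V 3)) \<or> dominated k S (V 2)"
    using dom w by (auto simp: L_verts_def)
  with bound show ?thesis by (auto split: if_splits)
qed

(* The base case L_0 = C_6: each colour class needs two vertices. *)
lemma lower_bound_tdset_C6:
  assumes T: "is_tdset (L_verts 0) (L_adj 0) S"
  shows "4 \<le> card S"
proof -
  have S: "S \<subseteq> L_verts 0" using T by (simp add: is_tdset_def)
  have "V 2 \<in> S \<or> U 3 \<in> S" "V 1 \<in> S \<or> V 3 \<in> S" "V 2 \<in> S \<or> U 1 \<in> S"
       "V 3 \<in> S \<or> U 2 \<in> S" "U 1 \<in> S \<or> U 3 \<in> S" "U 2 \<in> S \<or> V 1 \<in> S"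
    using T by (auto simp: is_tdset_def L_verts_def L_adj_def L_edge0_def)
  moreover have "card S = card (S \<inter> {V 2}) + card (S \<inter> {U 1, U 3}) + card (S \<inter> {U 2}) + card (S \<inter> {V 1, V 3})"
    using card_by_layers[OF S] by (simp add: X_layer_def Y_layer_def)
  ultimately show ?thesis by (auto simp: Int_insert_right)
qed

lemma card_witness:
  assumes "inj F" "inj G" "range F \<inter> range G = {}" "finite P" "P \<inter> (range F \<union> range G) = {}"
  shows "card (P \<union> F ` {1..k} \<union> G ` {1..k}) = card P + 2 * k"
proof -
  have "card (P \<union> F ` {1..k} \<union> G ` {1..k}) = card P + card (F ` {1..k}) + card (G ` {1..k})"
    using assms by (subst card_Un_disjoint; auto)+
  also have "\<dots> = card P + 2 * k"
    using assms by (simp add: card_image inj_on_subset)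
  finally show ?thesis .
qed

lemma tdset_witness:
  assumes k: "1 \<le> k"
  shows "\<exists>T. is_tdset (L_verts k) (L_adj k) T \<and> card T = 2 * k + 4"
proof -
  let ?T = "{V 1, V 2, U 1, U 2} \<union> A ` {1..k} \<union> B ` {1..k}"
  have "is_tdset (L_verts k) (L_adj k) ?T"
    using k by (auto simp: is_tdset_def L_verts_def neighbours_nf)
  moreover have "card ?T = 2 * k + 4"
    by (subst card_witness) (auto simp: inj_def)
  ultimately show ?thesis by blast
qed

lemma tdset_minus_witness:
  assumes k: "1 \<le> k" and w: "w \<in> {V 1, V 2, V 3}"
  shows "\<exists>T. is_tdset (L_verts k - {w}) (L_adj k) T \<and> card T = 2 * k + 3"
proof -
  have inj: "inj A" "inj B" "inj C" "inj D" by (auto simp: inj_def)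
  consider "w = V 1" | "w = V 2" | "w = V 3" using w by blast
  then show ?thesis
  proof cases
    case 1
    let ?T = "{V 3, U 1, U 2} \<union> C ` {1..k} \<union> B ` {1..k}"
    have "is_tdset (L_verts k - {w}) (L_adj k) ?T"
      using k 1 by (auto simp: is_tdset_def L_verts_def neighbours_nf)
    moreover have "card ?T = 2 * k + 3"
      using inj by (subst card_witness) auto
    ultimately show ?thesis by blast
  next
    case 2
    let ?T = "{C 1, U 1, U 2} \<union> A ` {1..k} \<union> B ` {1..k}"
    have "is_tdset (L_verts k - {w}) (L_adj k) ?T"
      using k 2 by (auto simp: is_tdset_def L_verts_def neighbours_nf)
    moreover have "card ?T = 2 * k + 3"
      using inj by (subst card_witness) auto
    ultimately show ?thesis by blast
  next
    case 3
    let ?T = "{V 1, U 1, U 2} \<union> A ` {1..k} \<union> D ` {1..k}"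
    have "is_tdset (L_verts k - {w}) (L_adj k) ?T"
      using k 3 by (auto simp: is_tdset_def L_verts_def neighbours_nf)
    moreover have "card ?T = 2 * k + 3"
      using inj by (subst card_witness) auto
    ultimately show ?thesis by blast
  qed
qed

lemma atdset_witness:
  assumes k: "1 \<le> k" and w: "w \<in> {V 1, V 2, V 3}"
  shows "\<exists>T. is_atdset (L_verts k) (L_adj k) w T \<and> card T = 2 * k + 3"
proof -
  have inj: "inj A" "inj B" "inj C" "inj D" by (auto simp: inj_def)
  consider "w = V 1" | "w = V 2" | "w = V 3" using w by blast
  then show ?thesis
  proof cases
    case 1
    let ?T = "{V 1, U 1, U 2} \<union> C ` {1..k} \<union> B ` {1..k}"
    have "is_atdset (L_verts k) (L_adj k) w ?T"
      using k 1 by (auto simp: is_atdset_def L_verts_def neighbours_nf)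
    moreover have "card ?T = 2 * k + 3"
      using inj by (subst card_witness) auto
    ultimately show ?thesis by blast
  next
    case 2
    let ?T = "{V 2, U 1, U 2} \<union> A ` {1..k} \<union> B ` {1..k}"
    have "is_atdset (L_verts k) (L_adj k) w ?T"
      using k 2 by (auto simp: is_atdset_def L_verts_def neighbours_nf)
    moreover have "card ?T = 2 * k + 3"
      using inj by (subst card_witness) auto
    ultimately show ?thesis by blast
  next
    case 3
    let ?T = "{V 3, U 1, U 2} \<union> A ` {1..k} \<union> D ` {1..k}"
    have "is_atdset (L_verts k) (L_adj k) w ?T"
      using k 3 by (auto simp: is_atdset_def L_verts_def neighbours_nf)
    moreover have "card ?T = 2 * k + 3"
      using inj by (subst card_witness) auto
    ultimately show ?thesis by blast
  qed
qed

lemma Min_card_eqI: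
  assumes "finite VS" "\<And>S. P S \<Longrightarrow> S \<subseteq> VS" "P T" "card T = m" "\<And>S. P S \<Longrightarrow> m \<le> card S"
  shows "Min {card S | S. P S} = m"
proof (rule Min_eqI)
  have "{card S | S. P S} \<subseteq> {..card VS}"
    using assms(1,2) card_mono by fastforce
  then show "finite {card S | S. P S}"
    using finite_subset by blast
qed (use assms in auto)

lemma finite_L_verts: "finite (L_verts k)"
  by (simp add: L_verts_layers finite_layers)

lemma gamma_t_C6: "gamma_t (L_verts 0) (L_adj 0) = 4"
  unfolding gamma_t_def
proof (rule Min_card_eqI[OF finite_L_verts])
  show "is_tdset (L_verts 0) (L_adj 0) {V 1, V 2, U 1, U 2}"
    by (auto simp: is_tdset_def L_verts_def L_adj_def L_edge0_def)
qed (auto simp: is_tdset_def lower_bound_tdset_C6)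

lemma gamma_t_L:
  assumes k: "1 \<le> k"
  shows "gamma_t (L_verts k) (L_adj k) = 2 * k + 4"
proof -
  obtain T where "is_tdset (L_verts k) (L_adj k) T" "card T = 2 * k + 4"
    using tdset_witness[OF k] by blast
  then show ?thesis
    unfolding gamma_t_def
    by (rule Min_card_eqI[OF finite_L_verts, rotated])
      (auto simp: is_tdset_def intro: lower_bound_tdset[OF k])
qed

lemma gamma_t_L_minus:
  assumes k: "1 \<le> k" and w: "w \<in> {V 1, V 2, V 3}"
  shows "gamma_t (L_verts k - {w}) (L_adj k) = 2 * k + 3"
proof -
  obtain T where "is_tdset (L_verts k - {w}) (L_adj k) T" "card T = 2 * k + 3"
    using tdset_minus_witness[OF k w] by blast
  moreover have "2 * k + 3 \<le> card S" if "is_tdset (L_verts k - {w}) (L_adj k) S" for S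
    using that by (intro lower_bound_all_but_one[OF k _ w]) (auto simp: is_tdset_def dominated_def)
  ultimately show ?thesis
    unfolding gamma_t_def
    by (intro Min_card_eqI[where VS = "L_verts k"]) (auto simp: is_tdset_def finite_L_verts)
qed

lemma gamma_ta_L:
  assumes k: "1 \<le> k" and w: "w \<in> {V 1, V 2, V 3}"
  shows "gamma_ta (L_verts k) (L_adj k) w = 2 * k + 3"
proof -
  obtain T where "is_atdset (L_verts k) (L_adj k) w T" "card T = 2 * k + 3"
    using atdset_witness[OF k w] by blast
  moreover have "2 * k + 3 \<le> card S" if "is_atdset (L_verts k) (L_adj k) w S" for S
    using that by (intro lower_bound_all_but_one[OF k _ w]) (auto simp: is_atdset_def dominated_def)
  ultimately show ?thesis
    unfolding gamma_ta_def
    by (intro Min_card_eqI[where VS = "L_verts k"]) (auto simp: is_atdset_def finite_L_verts)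
qed

theorem mainTheorem4:
  fixes k :: nat
  defines "n \<equiv> card (L_verts k)"
  shows "n = 4 * k + 6
    \<and> 2 * gamma_t (L_verts k) (L_adj k) = n + 2
    \<and> (k \<ge> 1 \<longrightarrow> (\<forall>w \<in> {V 1, V 2, V 3}.
          2 * gamma_t (L_verts k - {w}) (L_adj k) = n
        \<and> 2 * gamma_ta (L_verts k) (L_adj k) w = n))"
proof -
  have n: "n = 4 * k + 6"
    by (simp add: n_def card_L_verts)
  have "2 * gamma_t (L_verts k) (L_adj k) = n + 2"
  proof (cases "k = 0")
    case True
    then show ?thesis using n gamma_t_C6 by simp
  next
    case False
    then show ?thesis using n gamma_t_L[of k] by simp
  qed
  then show ?thesis
    using n gamma_t_L_minus gamma_ta_L by simp
qed

end
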